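(* Let $D^2\times S^1=\{((r,\phi),t): r\in[0,1],\ \phi,t\in[0,2\pi)\}$ with polar coordinates $(r,\phi)$ on the unit disk $D^2$. There exist a smooth codimension-one foliation $\mathcal{F}$ and a smooth Riemannian metric $g$ on $D^2\times S^1$ such that: (1) $\mathcal{F}$ is parabolic with respect to $g$; (2) the restriction of $\mathcal{F}$ to $D^2(\tfrac13)\times S^1=\{r\le \tfrac13\}$ is the foliation by the disks $D^2(\tfrac13)\times\{t\}$, which are totally geodesic with respect to $g$, and the restriction of $\mathcal{F}$ to $\{\tfrac23\le r\le 1\}$ is the foliation by the tori $\{r\}\times S^1\times S^1$, which are totally geodesic with respect to $g$.
   Context: For a foliation $\mathcal{F}$ of a Riemannian 3-manifold, with tangent plane distribution $\xi$, unit normal $n$ and Levi-Civita connection $\nabla$, the second fundamental form is $B(S,T)=\tfrac12\langle\nabla_ST+\nabla_TS,n\rangle$ for $S,T$ tangent to $\xi$, and the extrinsic curvature is $K_e=\det B/\det\langle\cdot,\cdot\rangle|_\xi$. The foliation is parabolic with respect to $g$ if $K_e\equiv0$, and a leaf is totally geodesic if $B\equiv 0$ on it. *)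

theory Defs
  imports "HOL-Analysis.Analysis"
begin

text \<open>Coordinates: a point p :: real^3 stands for (x,y,t) = (p$1, p$2, p$3), where
  (x,y) are Cartesian coordinates on the disk (x = r cos phi, y = r sin phi) and t is the
  S^1 coordinate, with everything 2 pi periodic in t.  D^2 x S^1 is the closed region
  x^2 + y^2 <= 1 modulo t ~ t + 2 pi.  Smooth objects on the manifold with boundary are
  represented by smooth functions on all of real^3 (Seeley/Whitney extension), 2 pi
  periodic in t; all geometric conditions are imposed only on the region.\<close>

definition pd :: "3 \<Rightarrow> (real^3 \<Rightarrow> real) \<Rightarrow> real^3 \<Rightarrow> real" where
  "pd i f p = frechet_derivative f (at p) (axis i 1)"

fun Ck :: "nat \<Rightarrow> (real^3 \<Rightarrow> real) \<Rightarrow> bool" where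
  "Ck 0 f = continuous_on UNIV f"
| "Ck (Suc k) f = ((\<forall>p. f differentiable (at p)) \<and> (\<forall>i. Ck k (pd i f)))"

definition smooth_fun :: "(real^3 \<Rightarrow> real) \<Rightarrow> bool" where
  "smooth_fun f \<longleftrightarrow> (\<forall>k. Ck k f)"

definition smooth_vf :: "(real^3 \<Rightarrow> real^3) \<Rightarrow> bool" where
  "smooth_vf V \<longleftrightarrow> (\<forall>i. smooth_fun (\<lambda>p. V p $ i))"

definition region :: "(real^3) set" where
  "region = {p. (p$1)^2 + (p$2)^2 \<le> 1}"

definition t_periodic :: "(real^3 \<Rightarrow> 'a) \<Rightarrow> bool" where
  "t_periodic f \<longleftrightarrow> (\<forall>p. f (p + axis 3 (2*pi)) = f p)"

definition riem_metric :: "(real^3 \<Rightarrow> real^3^3) \<Rightarrow> bool" where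
  "riem_metric g \<longleftrightarrow> (\<forall>i j. smooth_fun (\<lambda>p. g p $ i $ j)) \<and> t_periodic g \<and>
     (\<forall>p\<in>region. \<forall>i j. g p $ i $ j = g p $ j $ i) \<and>
     (\<forall>p\<in>region. \<forall>u. u \<noteq> 0 \<longrightarrow> (\<Sum>i\<in>UNIV. \<Sum>j\<in>UNIV. g p $ i $ j * u$i * u$j) > 0)"

definition ginner :: "(real^3 \<Rightarrow> real^3^3) \<Rightarrow> real^3 \<Rightarrow> real^3 \<Rightarrow> real^3 \<Rightarrow> real" where
  "ginner g p u v = (\<Sum>i\<in>UNIV. \<Sum>j\<in>UNIV. g p $ i $ j * u$i * v$j)"

definition christoffel :: "(real^3 \<Rightarrow> real^3^3) \<Rightarrow> 3 \<Rightarrow> 3 \<Rightarrow> 3 \<Rightarrow> real^3 \<Rightarrow> real" where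
  "christoffel g k i j p = (1/2) * (\<Sum>l\<in>UNIV. matrix_inv (g p) $ k $ l *
      (pd i (\<lambda>q. g q $ j $ l) p + pd j (\<lambda>q. g q $ i $ l) p - pd l (\<lambda>q. g q $ i $ j) p))"

definition lc_nabla :: "(real^3 \<Rightarrow> real^3^3) \<Rightarrow> (real^3 \<Rightarrow> real^3) \<Rightarrow> (real^3 \<Rightarrow> real^3) \<Rightarrow> real^3 \<Rightarrow> real^3" where
  "lc_nabla g S T p = (\<chi> k. (\<Sum>i\<in>UNIV. S p $ i * pd i (\<lambda>q. T q $ k) p)
      + (\<Sum>i\<in>UNIV. \<Sum>j\<in>UNIV. christoffel g k i j p * S p $ i * T p $ j))"

text \<open>Codimension-one foliation given by a nonvanishing integrable 1-form omega
  (components omega_x, omega_y, omega_t); its tangent plane distribution is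
  xi_p = ker omega_p.  Integrability (Frobenius): omega wedge d omega = 0,
  i.e. omega . curl omega = 0.\<close>
definition curl :: "(real^3 \<Rightarrow> real^3) \<Rightarrow> real^3 \<Rightarrow> real^3" where
  "curl w p = vector [pd 2 (\<lambda>q. w q $ 3) p - pd 3 (\<lambda>q. w q $ 2) p,
                      pd 3 (\<lambda>q. w q $ 1) p - pd 1 (\<lambda>q. w q $ 3) p,
                      pd 1 (\<lambda>q. w q $ 2) p - pd 2 (\<lambda>q. w q $ 1) p]"

definition foliation_form :: "(real^3 \<Rightarrow> real^3) \<Rightarrow> bool" where
  "foliation_form w \<longleftrightarrow> smooth_vf w \<and> t_periodic w \<and>
     (\<forall>p\<in>region. w p \<noteq> 0) \<and> (\<forall>p\<in>region. w p \<bullet> curl w p = 0)"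

definition tangent_vf :: "(real^3 \<Rightarrow> real^3) \<Rightarrow> (real^3 \<Rightarrow> real^3) \<Rightarrow> bool" where
  "tangent_vf w S \<longleftrightarrow> smooth_vf S \<and> (\<forall>p\<in>region. w p \<bullet> S p = 0)"

definition unit_normal :: "(real^3 \<Rightarrow> real^3^3) \<Rightarrow> (real^3 \<Rightarrow> real^3) \<Rightarrow> real^3 \<Rightarrow> real^3" where
  "unit_normal g w p = (let v = matrix_inv (g p) *v w p in (1 / sqrt (ginner g p v v)) *\<^sub>R v)"

definition sff :: "(real^3 \<Rightarrow> real^3^3) \<Rightarrow> (real^3 \<Rightarrow> real^3) \<Rightarrow> (real^3 \<Rightarrow> real^3) \<Rightarrow> (real^3 \<Rightarrow> real^3) \<Rightarrow> real^3 \<Rightarrow> real" where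
  "sff g w S T p = (1/2) * ginner g p (lc_nabla g S T p + lc_nabla g T S p) (unit_normal g w p)"

definition ext_curv :: "(real^3 \<Rightarrow> real^3^3) \<Rightarrow> (real^3 \<Rightarrow> real^3) \<Rightarrow> (real^3 \<Rightarrow> real^3) \<Rightarrow> (real^3 \<Rightarrow> real^3) \<Rightarrow> real^3 \<Rightarrow> real" where
  "ext_curv g w E1 E2 p =
     (sff g w E1 E1 p * sff g w E2 E2 p - sff g w E1 E2 p * sff g w E2 E1 p) /
     (ginner g p (E1 p) (E1 p) * ginner g p (E2 p) (E2 p) - ginner g p (E1 p) (E2 p) * ginner g p (E2 p) (E1 p))"

definition parabolic :: "(real^3 \<Rightarrow> real^3^3) \<Rightarrow> (real^3 \<Rightarrow> real^3) \<Rightarrow> bool" where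
  "parabolic g w \<longleftrightarrow> (\<forall>p\<in>region. \<forall>E1 E2. tangent_vf w E1 \<and> tangent_vf w E2 \<and>
      \<not> collinear {0, E1 p, E2 p} \<longrightarrow> ext_curv g w E1 E2 p = 0)"

definition totally_geodesic_on :: "(real^3 \<Rightarrow> real^3^3) \<Rightarrow> (real^3 \<Rightarrow> real^3) \<Rightarrow> (real^3) set \<Rightarrow> bool" where
  "totally_geodesic_on g w A \<longleftrightarrow> (\<forall>p\<in>A. \<forall>S T. tangent_vf w S \<and> tangent_vf w T \<longrightarrow> sff g w S T p = 0)"

definition inner_part :: "(real^3) set" where
  "inner_part = {p. (p$1)^2 + (p$2)^2 \<le> (1/3)^2}"

definition outer_part :: "(real^3) set" where
  "outer_part = {p. (2/3)^2 \<le> (p$1)^2 + (p$2)^2 \<and> (p$1)^2 + (p$2)^2 \<le> 1}"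

end

theory Submission
  imports Defs "HOL-Computational_Algebra.Polynomial"
begin

text \<open>Take the conormal \<open>\<omega> = a (x dx + y dy) + (1 - a) dt\<close>, where
  \<open>a = a(r\<^sup>2)\<close> is a smooth step from \<open>0\<close> (for \<open>r\<^sup>2 \<le> 4/25\<close>) to \<open>1\<close> (for \<open>r\<^sup>2 \<ge> 2/5\<close>); it is
  integrable, and its leaves are the horizontal disks near the core and the tori \<open>r = const\<close>
  near the boundary.  The metric is \<open>g = I + \<sigma>(r\<^sup>2) J J\<^sup>T\<close> with \<open>J = -y \<partial>\<^sub>x + x \<partial>\<^sub>y\<close> the
  rotation field.  Since \<open>J\<close> lies in \<open>ker \<omega>\<close>, \<open>g\<close> fixes \<open>\<omega>\<close>, so the unit normal is \<open>\<omega>/|\<omega>|\<close> and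
  the second fundamental form is \<open>-Q/|\<omega>|\<close> for an explicit quadratic form \<open>Q\<close>.  Where \<open>a\<close> is
  locally \<open>0\<close>, \<open>Q = 0\<close>.  Where \<open>r\<^sup>2 > 3/20\<close>, \<open>\<sigma> = (1 - r\<^sup>2)/r\<^sup>4\<close> satisfies
  \<open>r\<^sup>2 (2\<sigma> + r\<^sup>2\<sigma>') = -1\<close>, which makes the angular part of \<open>Q\<close> cancel; what remains depends
  on a vector in \<open>ker \<omega>\<close> only through its radial and \<open>t\<close> components, which are proportional
  there, so \<open>Q\<close> has rank at most one on \<open>ker \<omega>\<close> and the extrinsic curvature vanishes.  Where
  also \<open>a' = 0\<close>, \<open>Q\<close> vanishes on \<open>ker \<omega>\<close>: the tori are totally geodesic.\<close>

section \<open>Smooth functions on \<open>\<real>\<^sup>3\<close>\<close>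

lemma pd_has_derivative: "(f has_derivative f') (at p) \<Longrightarrow> pd i f p = f' (axis i 1)"
  unfolding pd_def using frechet_derivative_at by metis

lemma Ck_Suc_imp_Ck: "Ck (Suc k) f \<Longrightarrow> Ck k f"
proof (induction k arbitrary: f)
  case 0
  then show ?case
    by (auto intro!: continuous_at_imp_continuous_on differentiable_imp_continuous_within)
next
  case (Suc k)
  then show ?case by (metis Ck.simps(2))
qed

lemma pd_add:
  "f differentiable (at p) \<Longrightarrow> g differentiable (at p) \<Longrightarrow>
   pd i (\<lambda>q. f q + g q) p = pd i f p + pd i g p"
  by (rule pd_has_derivative[where f' = "\<lambda>h. frechet_derivative f (at p) h + frechet_derivative g (at p) h",
        THEN trans])
     (simp_all add: has_derivative_add frechet_derivative_works pd_def)

lemma pd_mult: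
  "f differentiable (at p) \<Longrightarrow> g differentiable (at p) \<Longrightarrow>
   pd i (\<lambda>q. f q * g q) p = pd i f p * g p + f p * pd i g p"
  by (rule pd_has_derivative[where f' = "\<lambda>h. f p * frechet_derivative g (at p) h + frechet_derivative f (at p) h * g p",
        THEN trans])
     (simp_all add: has_derivative_mult frechet_derivative_works pd_def)

lemma has_derivative_real_chain:
  assumes "(\<phi> has_real_derivative d) (at (u p))" and "u differentiable (at p)"
  shows "((\<lambda>q. \<phi> (u q)) has_derivative (\<lambda>h. d * frechet_derivative u (at p) h)) (at p)"
  using has_derivative_compose[of u "frechet_derivative u (at p)" p UNIV \<phi> "(*) d"] assms
  by (simp add: frechet_derivative_works has_field_derivative_def)

lemma pd_chain:
  "(\<phi> has_real_derivative d) (at (u p)) \<Longrightarrow> u differentiable (at p) \<Longrightarrow>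
   pd i (\<lambda>q. \<phi> (u q)) p = d * pd i u p"
  using pd_has_derivative[OF has_derivative_real_chain] unfolding pd_def by simp

lemma pd_const: "pd i (\<lambda>q. c) p = 0"
  using pd_has_derivative[OF has_derivative_const] by simp

lemma pd_coord: "pd i (\<lambda>q. q $ j) p = (if i = j then 1 else 0)"
proof -
  have "((\<lambda>q::real^3. q $ j) has_derivative (\<lambda>h. h $ j)) (at p)"
    by (simp add: bounded_linear_imp_has_derivative bounded_linear_vec_nth bounded_linear_ident)
  then show ?thesis using pd_has_derivative by (fastforce simp: axis_def)
qed

lemma pd_minus: "f differentiable (at p) \<Longrightarrow> pd i (\<lambda>q. - f q) p = - pd i f p"
  using pd_mult[of "\<lambda>q. -1" p f i] by (simp add: pd_const)

lemma pd_diff: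
  "f differentiable (at p) \<Longrightarrow> g differentiable (at p) \<Longrightarrow>
   pd i (\<lambda>q. f q - g q) p = pd i f p - pd i g p"
  using pd_add[of f p "\<lambda>q. - g q" i] pd_minus[of g p i] differentiable_minus[of g] by simp

lemmas pd_rules = pd_add pd_mult pd_diff pd_minus pd_const pd_coord

lemma Ck_const: "Ck k (\<lambda>q. c)"
proof (induction k arbitrary: c)
  case (Suc k)
  have "pd i (\<lambda>q. c) = (\<lambda>q. 0)" for i by (simp add: pd_const fun_eq_iff)
  then show ?case using Suc by simp
qed simp

lemma Ck_add: "Ck k f \<Longrightarrow> Ck k g \<Longrightarrow> Ck k (\<lambda>q. f q + g q)"
proof (induction k arbitrary: f g)
  case 0 then show ?case by (auto intro: continuous_on_add)
next
  case (Suc k)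
  have "pd i (\<lambda>q. f q + g q) = (\<lambda>q. pd i f q + pd i g q)" for i
    using Suc.prems by (auto simp: pd_add)
  then show ?case using Suc by auto
qed

lemma Ck_mult: "Ck k f \<Longrightarrow> Ck k g \<Longrightarrow> Ck k (\<lambda>q. f q * g q)"
proof (induction k arbitrary: f g)
  case 0 then show ?case by (auto intro: continuous_on_mult)
next
  case (Suc k)
  have "pd i (\<lambda>q. f q * g q) = (\<lambda>q. pd i f q * g q + f q * pd i g q)" for i
    using Suc.prems by (auto simp: pd_mult)
  moreover have "Ck k f" "Ck k g" using Suc.prems Ck_Suc_imp_Ck by blast+
  ultimately show ?case using Suc by (auto intro!: Ck_add differentiable_mult)
qed

lemma Ck_coord: "Ck k (\<lambda>q. q $ j)"
proof (cases k)
  case 0 then show ?thesis by (simp add: linear_continuous_on bounded_linear_vec_nth bounded_linear_ident)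
next
  case (Suc m)
  have "(\<lambda>q::real^3. q $ j) differentiable (at p)" for p
    by (simp add: bounded_linear_imp_differentiable bounded_linear_vec_nth bounded_linear_ident)
  moreover have "pd i (\<lambda>q. q $ j) = (\<lambda>q. if i = j then 1 else 0)" for i
    by (auto simp: pd_coord)
  ultimately show ?thesis using Suc by (auto simp: Ck_const)
qed

definition deriv_seq_on :: "real set \<Rightarrow> (nat \<Rightarrow> real \<Rightarrow> real) \<Rightarrow> bool" where
  "deriv_seq_on U D \<longleftrightarrow> (\<forall>n x. x \<in> U \<longrightarrow> (D n has_real_derivative D (Suc n) x) (at x))"

lemma Ck_compose:
  assumes D: "deriv_seq_on U D" and U: "\<forall>p. u p \<in> U" and u: "smooth_fun u"
  shows "Ck k (\<lambda>q. D n (u q))"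
proof (induction k arbitrary: n)
  case 0
  have "continuous_on UNIV u" using u unfolding smooth_fun_def by (metis Ck.simps(1))
  moreover have "isCont (D n) (u p)" for p using D U unfolding deriv_seq_on_def
    using DERIV_isCont by blast
  ultimately have "isCont (\<lambda>q. D n (u q)) p" for p
    using continuous_at_compose[of p u "D n"] continuous_on_eq_continuous_at[of UNIV u]
    by (simp add: o_def)
  then show ?case by (simp add: continuous_at_imp_continuous_on)
next
  case (Suc k)
  have du: "u differentiable (at p)" and "Ck k (pd i u)" for p i
    using u unfolding smooth_fun_def by (metis Ck.simps(2))+
  moreover have dD: "(D n has_real_derivative D (Suc n) (u p)) (at (u p))" for p n
    using D U unfolding deriv_seq_on_def by blast
  moreover have "pd i (\<lambda>q. D n (u q)) = (\<lambda>q. D (Suc n) (u q) * pd i u q)" for i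
    using pd_chain[OF dD du] by auto
  moreover have "(\<lambda>q. D n (u q)) differentiable (at p)" for p
    using has_derivative_real_chain[OF dD du] unfolding differentiable_def by blast
  ultimately show ?case using Suc by (auto intro!: Ck_mult)
qed

lemma smooth_const: "smooth_fun (\<lambda>q. c)" by (simp add: smooth_fun_def Ck_const)
lemma smooth_coord: "smooth_fun (\<lambda>q. q $ j)" by (simp add: smooth_fun_def Ck_coord)
lemma smooth_add: "smooth_fun f \<Longrightarrow> smooth_fun g \<Longrightarrow> smooth_fun (\<lambda>q. f q + g q)"
  by (simp add: smooth_fun_def Ck_add)
lemma smooth_mult: "smooth_fun f \<Longrightarrow> smooth_fun g \<Longrightarrow> smooth_fun (\<lambda>q. f q * g q)"
  by (simp add: smooth_fun_def Ck_mult)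
lemma smooth_minus: "smooth_fun f \<Longrightarrow> smooth_fun (\<lambda>q. - f q)"
  using smooth_mult[OF smooth_const, of f "-1"] by simp
lemma smooth_diff: "smooth_fun f \<Longrightarrow> smooth_fun g \<Longrightarrow> smooth_fun (\<lambda>q. f q - g q)"
  using smooth_add[OF _ smooth_minus] by simp
lemma smooth_compose:
  "deriv_seq_on U D \<Longrightarrow> \<forall>p. u p \<in> U \<Longrightarrow> smooth_fun u \<Longrightarrow> smooth_fun (\<lambda>q. D n (u q))"
  by (simp add: smooth_fun_def Ck_compose)
lemma smooth_differentiable: "smooth_fun f \<Longrightarrow> f differentiable (at p)"
  unfolding smooth_fun_def by (metis Ck.simps(2))

lemma pd_inner:
  assumes "smooth_vf w" "smooth_vf T"
  shows "pd i (\<lambda>q. w q \<bullet> T q) p =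
    (\<Sum>k\<in>UNIV. pd i (\<lambda>q. w q $ k) p * T p $ k + w p $ k * pd i (\<lambda>q. T q $ k) p)"
proof -
  have d: "(\<lambda>q. w q $ k) differentiable (at p)" "(\<lambda>q. T q $ k) differentiable (at p)" for k
    using assms smooth_differentiable unfolding smooth_vf_def by blast+
  have "(\<lambda>q. w q \<bullet> T q) = (\<lambda>q. w q $ 1 * T q $ 1 + (w q $ 2 * T q $ 2 + w q $ 3 * T q $ 3))"
    by (simp add: inner_vec_def sum_3 add.assoc)
  then show ?thesis
    using d by (simp add: sum_3 pd_add pd_mult differentiable_add differentiable_mult)
qed

section \<open>The flat function \<open>exp(-1/t)\<close>\<close>

lemma poly_power_exp_neg_tendsto_0: "((\<lambda>x::real. poly P x * x^k * exp (- x)) \<longlongrightarrow> 0) at_top"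
proof (induction P arbitrary: k rule: pCons_induct)
  case 0 then show ?case by simp
next
  case (pCons c q)
  have "poly (pCons c q) x * x^k * exp (- x) = c * (x^k / exp x) + poly q x * x^(Suc k) * exp (- x)" for x
    by (simp add: exp_minus field_simps)
  then show ?case
    using tendsto_add[OF tendsto_mult[OF tendsto_const tendsto_power_div_exp_0] pCons.IH[of "Suc k"]]
    by simp
qed

text \<open>For \<open>t > 0\<close> the \<open>n\<close>-th derivative of \<open>exp(-1/t)\<close> is \<open>P\<^sub>n(1/t) exp(-1/t)\<close>.\<close>

fun flat_poly :: "nat \<Rightarrow> real poly" where
  "flat_poly 0 = 1"
| "flat_poly (Suc n) = [:0, 0, 1:] * (flat_poly n - pderiv (flat_poly n))"

definition flat_deriv :: "nat \<Rightarrow> real \<Rightarrow> real" where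
  "flat_deriv n t = (if 0 < t then poly (flat_poly n) (inverse t) * exp (- inverse t) else 0)"

lemma flat_deriv_pos_has_derivative:
  assumes "0 < t"
  shows "((\<lambda>t. poly (flat_poly n) (inverse t) * exp (- inverse t)) has_real_derivative
     poly (flat_poly (Suc n)) (inverse t) * exp (- inverse t)) (at t)"
proof -
  have "((\<lambda>t. poly (flat_poly n) (inverse t) * exp (- inverse t)) has_real_derivative
     (poly (pderiv (flat_poly n)) (inverse t) * (- inverse (t^2))) * exp (- inverse t) +
      poly (flat_poly n) (inverse t) * (exp (- inverse t) * inverse (t^2))) (at t)"
    using assms
    by (auto intro!: derivative_eq_intros DERIV_chain2[OF poly_DERIV] simp: power2_eq_square)
  then show ?thesis by (simp add: algebra_simps power2_eq_square)
qed

lemma flat_deriv_has_derivative_0: "(flat_deriv n has_real_derivative 0) (at 0)"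
proof -
  have L: "((\<lambda>h. flat_deriv n h / h) \<longlongrightarrow> 0) (at_left 0)"
  proof (rule Lim_transform_eventually[OF tendsto_const])
    show "\<forall>\<^sub>F x in at_left 0. 0 = flat_deriv n x / x"
      using eventually_at_left_real[of "-1" "0::real"]
      by (rule eventually_mono) (auto simp: flat_deriv_def)
  qed
  have "((\<lambda>h. poly (flat_poly n) (inverse h) * (inverse h)^1 * exp (- inverse h)) \<longlongrightarrow> 0) (at_right 0)"
    using filterlim_compose[OF poly_power_exp_neg_tendsto_0[of "flat_poly n" 1] filterlim_inverse_at_top_right] by simp
  then have R: "((\<lambda>h. flat_deriv n h / h) \<longlongrightarrow> 0) (at_right 0)"
  proof (rule Lim_transform_eventually)
    show "\<forall>\<^sub>F x in at_right 0. poly (flat_poly n) (inverse x) * (inverse x)^1 * exp (- inverse x) =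
        flat_deriv n x / x"
      using eventually_at_right_real[of "0::real" "1"]
      by (rule eventually_mono) (auto simp: flat_deriv_def divide_inverse)
  qed
  have "((\<lambda>h. flat_deriv n h / h) \<longlongrightarrow> 0) (at 0)"
    using L R by (rule filterlim_split_at)
  then show ?thesis unfolding DERIV_def by (simp add: flat_deriv_def)
qed

lemma flat_deriv_has_derivative: "(flat_deriv n has_real_derivative flat_deriv (Suc n) t) (at t)"
proof (cases t "0::real" rule: linorder_cases)
  case less
  have "(flat_deriv n has_real_derivative 0) (at t)"
    by (rule has_field_derivative_transform_within_open[of "\<lambda>_. 0" _ _ "{..<0}"])
       (use less in \<open>auto simp: flat_deriv_def\<close>)
  then show ?thesis using less by (simp add: flat_deriv_def)
next
  case equal
  then show ?thesis using flat_deriv_has_derivative_0 by (simp add: flat_deriv_def)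
next
  case greater
  show ?thesis
    by (rule has_field_derivative_transform_within_open[of _ _ _ "{0<..}"])
       (use flat_deriv_pos_has_derivative[OF greater] greater in \<open>auto simp: flat_deriv_def\<close>)
qed

lemma deriv_seq_flat_deriv: "deriv_seq_on UNIV flat_deriv"
  unfolding deriv_seq_on_def using flat_deriv_has_derivative by blast

definition inverse_deriv :: "nat \<Rightarrow> real \<Rightarrow> real" where
  "inverse_deriv n t = (-1)^n * fact n * inverse t ^ Suc n"

lemma deriv_seq_inverse_deriv: "deriv_seq_on {0<..} inverse_deriv"
  unfolding deriv_seq_on_def
proof (intro allI impI)
  fix n and x :: real assume "x \<in> {0<..}"
  then have x: "x \<noteq> 0" by auto
  have "(inverse_deriv n has_real_derivative
      (-1)^n * fact n * (of_nat (Suc n) * inverse x ^ n * (- (inverse x ^ 2)))) (at x)"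
    unfolding inverse_deriv_def using x
    by (auto intro!: derivative_eq_intros simp: power2_eq_square) (cases n; simp add: algebra_simps)
  then show "(inverse_deriv n has_real_derivative inverse_deriv (Suc n) x) (at x)"
    by (simp add: inverse_deriv_def algebra_simps power2_eq_square)
qed

lemma inverse_deriv_0: "inverse_deriv 0 t = inverse t"
  by (simp add: inverse_deriv_def)

section \<open>Second fundamental form when the metric fixes the conormal\<close>

lemma has_derivative_zero_on_segment:
  fixes f :: "'a::real_normed_vector \<Rightarrow> real"
  assumes d: "(f has_derivative f') (at p)" and z: "\<forall>s\<in>{0..1}. f (p + s *\<^sub>R (q - p)) = 0"
  shows "f' (q - p) = 0"
proof -
  have "((\<lambda>s. p + s *\<^sub>R (q - p)) has_derivative (\<lambda>s. s *\<^sub>R (q - p))) (at 0)"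
    by (auto intro!: derivative_eq_intros)
  from has_derivative_compose[OF this, of f f'] d
  have "((\<lambda>s. f (p + s *\<^sub>R (q - p))) has_derivative (\<lambda>s. f' (s *\<^sub>R (q - p)))) (at 0)"
    by simp
  moreover have "(\<lambda>s. f' (s *\<^sub>R (q - p))) = (*) (f' (q - p))"
    using has_derivative_linear[OF d] by (auto simp: linear_scale)
  ultimately have "((\<lambda>s. f (p + s *\<^sub>R (q - p))) has_real_derivative f' (q - p)) (at 0)"
    by (simp add: has_field_derivative_def mult.commute)
  then have "((\<lambda>h. (f (p + h *\<^sub>R (q - p)) - f (p + 0 *\<^sub>R (q - p))) / h) \<longlongrightarrow> f' (q - p)) (at 0)"
    unfolding DERIV_def by simp
  then have L: "((\<lambda>h. (f (p + h *\<^sub>R (q - p)) - f (p + 0 *\<^sub>R (q - p))) / h) \<longlongrightarrow> f' (q - p)) (at_right 0)"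
    by (rule tendsto_mono[OF at_le, rotated]) simp
  have "\<forall>\<^sub>F h in at_right 0. (f (p + h *\<^sub>R (q - p)) - f (p + 0 *\<^sub>R (q - p))) / h = 0"
    using eventually_at_right_real[of "0::real" 1]
    by (rule eventually_mono) (use z[rule_format, of 0] z in auto)
  then have "((\<lambda>h. (f (p + h *\<^sub>R (q - p)) - f (p + 0 *\<^sub>R (q - p))) / h) \<longlongrightarrow> 0) (at_right 0)"
    by (rule tendsto_eventually)
  from tendsto_unique[OF _ L this] show ?thesis by simp
qed

lemma segment_in_region:
  assumes p: "p \<in> region" and q: "q \<in> region" and s: "0 \<le> s" "s \<le> 1"
  shows "p + s *\<^sub>R (q - p) \<in> region"
proof -
  let ?x1 = "p$1" and ?y1 = "p$2" and ?x2 = "q$1" and ?y2 = "q$2"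
  have e: "((1-s)*?x1 + s*?x2)^2 + ((1-s)*?y1 + s*?y2)^2 =
     (1-s)*(?x1^2+?y1^2) + s*(?x2^2+?y2^2) - s*(1-s)*((?x1-?x2)^2+(?y1-?y2)^2)"
    by (simp add: algebra_simps power2_eq_square)
  have "s*(1-s)*((?x1-?x2)^2+(?y1-?y2)^2) \<ge> 0" using s by simp
  moreover have "(1-s)*(?x1^2+?y1^2) \<le> (1-s)" "s*(?x2^2+?y2^2) \<le> s"
    using p q s by (auto simp: region_def intro: mult_left_le)
  ultimately have "((1-s)*?x1 + s*?x2)^2 + ((1-s)*?y1 + s*?y2)^2 \<le> 1" unfolding e by linarith
  moreover have "(p + s *\<^sub>R (q - p))$1 = (1-s)*?x1 + s*?x2" "(p + s *\<^sub>R (q - p))$2 = (1-s)*?y1 + s*?y2"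
    by (simp_all add: algebra_simps)
  ultimately show ?thesis by (simp add: region_def)
qed

text \<open>This also holds at boundary points: the region is convex and contains a segment in
  every coordinate direction.\<close>

lemma pd_vanishing_on_region:
  assumes d: "f differentiable (at p)" and p: "p \<in> region" and z: "\<forall>q\<in>region. f q = 0"
  shows "pd i f p = 0"
proof -
  let ?f' = "frechet_derivative f (at p)"
  have D: "(f has_derivative ?f') (at p)" using d frechet_derivative_works by blast
  have lin: "linear ?f'" using D has_derivative_linear by blast
  have Z: "?f' (q - p) = 0" if "q \<in> region" for q
    using has_derivative_zero_on_segment[OF D] segment_in_region[OF p that] z by auto
  define c :: "real^3" where "c = axis 3 (p$3)"
  have c: "c \<in> region" "c + (1/2) *\<^sub>R axis i 1 \<in> region"
    using exhaust_3[of i] by (auto simp: region_def c_def axis_def power2_eq_square)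
  have "?f' ((c + (1/2) *\<^sub>R axis i 1) - p) - ?f' (c - p) = ?f' ((1/2) *\<^sub>R axis i 1)"
    using lin by (simp add: linear_diff[symmetric] algebra_simps)
  then have "(1/2) * ?f' (axis i 1) = 0" using Z[OF c(1)] Z[OF c(2)] lin by (simp add: linear_scale)
  then show ?thesis unfolding pd_def by simp
qed

lemma tangent_field_derivative:
  assumes w: "smooth_vf w" and T: "smooth_vf T" and z: "\<forall>q\<in>region. w q \<bullet> T q = 0"
    and p: "p \<in> region"
  shows "(\<Sum>k\<in>UNIV. \<Sum>i\<in>UNIV. S p $ i * (pd i (\<lambda>q. w q $ k) p * T p $ k + w p $ k * pd i (\<lambda>q. T q $ k) p)) = 0"
proof -
  have "(\<lambda>q. w q \<bullet> T q) = (\<lambda>q. w q $ 1 * T q $ 1 + (w q $ 2 * T q $ 2 + w q $ 3 * T q $ 3))"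
    by (simp add: inner_vec_def sum_3 add.assoc)
  moreover have "(\<lambda>q. w q $ k) differentiable (at p)" "(\<lambda>q. T q $ k) differentiable (at p)" for k
    using assms smooth_differentiable unfolding smooth_vf_def by blast+
  ultimately have "(\<lambda>q. w q \<bullet> T q) differentiable (at p)"
    by (simp add: differentiable_add differentiable_mult)
  then have "pd i (\<lambda>q. w q \<bullet> T q) p = 0" for i
    using pd_vanishing_on_region p z by blast
  then have "(\<Sum>i\<in>UNIV. S p $ i * (\<Sum>k\<in>UNIV. pd i (\<lambda>q. w q $ k) p * T p $ k + w p $ k * pd i (\<lambda>q. T q $ k) p)) = 0"
    using pd_inner[OF w T] by simp
  then show ?thesis by (simp add: sum_3 algebra_simps)
qed

lemma matrix_inv_inverse:
  "invertible (A::real^'n^'n) \<Longrightarrow> A ** matrix_inv A = mat 1 \<and> matrix_inv A ** A = mat 1"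
  unfolding invertible_def matrix_inv_def by (rule someI_ex)

lemma matrix_inv_fixed_vector:
  fixes A :: "real^'n^'n"
  assumes "invertible A" and "A *v v = v"
  shows "matrix_inv A *v v = v"
  by (metis assms matrix_inv_inverse matrix_vector_mul_assoc matrix_vector_mul_lid)

lemma matrix_inv_fixed_row:
  fixes A :: "real^'n^'n"
  assumes "invertible A" and "transpose A = A" and "A *v v = v"
  shows "v v* matrix_inv A = v"
proof -
  have "v v* A = v" by (metis assms(2,3) vector_transpose_matrix)
  then show ?thesis
    by (metis assms(1) matrix_inv_inverse vector_matrix_mul_assoc vector_matrix_mul_rid)
qed

lemma posdef_invertible:
  fixes A :: "real^'n^'n"
  assumes "\<forall>u. u \<noteq> 0 \<longrightarrow> (\<Sum>i\<in>UNIV. \<Sum>j\<in>UNIV. A $ i $ j * u$i * u$j) > 0"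
  shows "invertible A"
proof -
  have "x = 0" if "A *v x = 0" for x
  proof (rule ccontr)
    assume "x \<noteq> 0"
    then have "(\<Sum>i\<in>UNIV. \<Sum>j\<in>UNIV. A $ i $ j * x$i * x$j) > 0" using assms by blast
    moreover have "(\<Sum>i\<in>UNIV. \<Sum>j\<in>UNIV. A $ i $ j * x$i * x$j) = (\<Sum>i\<in>UNIV. x$i * (A *v x)$i)"
      by (simp add: matrix_vector_mult_def sum_distrib_left algebra_simps)
    ultimately show False using that by simp
  qed
  then show ?thesis using matrix_left_invertible_ker invertible_left_inverse by blast
qed

lemma ginner_fixed:
  assumes "g p *v w p = w p"
  shows "ginner g p X (c *\<^sub>R w p) = c * (X \<bullet> w p)"
proof -
  have "ginner g p X (c *\<^sub>R w p) = c * (\<Sum>i\<in>UNIV. X $ i * (g p *v w p) $ i)"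
    unfolding ginner_def matrix_vector_mult_def by (simp add: sum_3 algebra_simps)
  then show ?thesis using assms by (simp add: inner_vec_def)
qed

lemma unit_normal_fixed:
  assumes "g p *v w p = w p" and "invertible (g p)"
  shows "unit_normal g w p = (1 / norm (w p)) *\<^sub>R w p"
  using ginner_fixed[where g=g and p=p and w=w, OF assms(1), of "w p" 1]
  unfolding unit_normal_def Let_def matrix_inv_fixed_vector[where A="g p" and v="w p", OF assms(2,1)]
  by (simp add: norm_eq_sqrt_inner)

text \<open>Twice the Christoffel symbols of the first kind, contracted with \<open>w\<close>.\<close>

definition normal_christoffel ::
    "(real^3 \<Rightarrow> real^3^3) \<Rightarrow> (real^3 \<Rightarrow> real^3) \<Rightarrow> 3 \<Rightarrow> 3 \<Rightarrow> real^3 \<Rightarrow> real" where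
  "normal_christoffel g w i j p = (\<Sum>l\<in>UNIV. w p $ l *
     (pd i (\<lambda>q. g q $ j $ l) p + pd j (\<lambda>q. g q $ i $ l) p - pd l (\<lambda>q. g q $ i $ j) p))"

lemma normal_christoffel_sym:
  assumes "\<forall>q i j. g q $ i $ j = g q $ j $ i"
  shows "normal_christoffel g w i j p = normal_christoffel g w j i p"
proof -
  have "(\<lambda>q. g q $ i $ j) = (\<lambda>q. g q $ j $ i)" using assms by auto
  then show ?thesis unfolding normal_christoffel_def by (simp add: sum_3 algebra_simps)
qed

lemma inner_christoffel:
  assumes "w p v* matrix_inv (g p) = w p"
  shows "(\<Sum>k\<in>UNIV. w p $ k * christoffel g k i j p) = (1/2) * normal_christoffel g w i j p"
proof -
  let ?G = "\<lambda>l. pd i (\<lambda>q. g q $ j $ l) p + pd j (\<lambda>q. g q $ i $ l) p - pd l (\<lambda>q. g q $ i $ j) p"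
  have winv: "(\<Sum>k\<in>UNIV. w p $ k * matrix_inv (g p) $ k $ l) = w p $ l" for l
    by (metis (no_types) assms vec_lambda_beta vector_matrix_mult_def)
  have "(\<Sum>k\<in>UNIV. w p $ k * christoffel g k i j p)
      = (1/2) * (\<Sum>l\<in>UNIV. (\<Sum>k\<in>UNIV. w p $ k * matrix_inv (g p) $ k $ l) * ?G l)"
    unfolding christoffel_def by (simp add: sum_3 algebra_simps)
  then show ?thesis unfolding winv normal_christoffel_def by simp
qed

lemma inner_lc_nabla:
  assumes "w p v* matrix_inv (g p) = w p"
  shows "w p \<bullet> lc_nabla g S T p =
      (\<Sum>k\<in>UNIV. w p $ k * (\<Sum>i\<in>UNIV. S p $ i * pd i (\<lambda>q. T q $ k) p))
    + (1/2) * (\<Sum>i\<in>UNIV. \<Sum>j\<in>UNIV. S p $ i * T p $ j * normal_christoffel g w i j p)"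
proof -
  have "(\<Sum>k\<in>UNIV. w p $ k * (\<Sum>i\<in>UNIV. \<Sum>j\<in>UNIV. christoffel g k i j p * S p $ i * T p $ j))
      = (\<Sum>i\<in>UNIV. \<Sum>j\<in>UNIV. S p $ i * T p $ j * (\<Sum>k\<in>UNIV. w p $ k * christoffel g k i j p))"
    by (simp add: sum_3 algebra_simps)
  also have "\<dots> = (1/2) * (\<Sum>i\<in>UNIV. \<Sum>j\<in>UNIV. S p $ i * T p $ j * normal_christoffel g w i j p)"
    unfolding inner_christoffel[where g=g and p=p and w=w, OF assms] by (simp add: sum_3 algebra_simps)
  finally show ?thesis
    unfolding lc_nabla_def inner_vec_def by (simp add: distrib_left sum.distrib)
qed

text \<open>The derivative of \<open>T\<close> drops out because \<open>w \<bullet> T = 0\<close> along the region.\<close>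

lemma inner_lc_nabla_tangent:
  assumes "w p v* matrix_inv (g p) = w p"
    and "(\<Sum>k\<in>UNIV. \<Sum>i\<in>UNIV. S p $ i * (pd i (\<lambda>q. w q $ k) p * T p $ k + w p $ k * pd i (\<lambda>q. T q $ k) p)) = 0"
  shows "w p \<bullet> lc_nabla g S T p =
      - (\<Sum>i\<in>UNIV. \<Sum>k\<in>UNIV. S p $ i * T p $ k * pd i (\<lambda>q. w q $ k) p)
    + (1/2) * (\<Sum>i\<in>UNIV. \<Sum>j\<in>UNIV. S p $ i * T p $ j * normal_christoffel g w i j p)"
proof -
  have "(\<Sum>k\<in>UNIV. \<Sum>i\<in>UNIV. S p $ i * (pd i (\<lambda>q. w q $ k) p * T p $ k + w p $ k * pd i (\<lambda>q. T q $ k) p))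
     = (\<Sum>k\<in>UNIV. w p $ k * (\<Sum>i\<in>UNIV. S p $ i * pd i (\<lambda>q. T q $ k) p))
     + (\<Sum>i\<in>UNIV. \<Sum>k\<in>UNIV. S p $ i * T p $ k * pd i (\<lambda>q. w q $ k) p)"
    by (simp add: sum_3 algebra_simps)
  then show ?thesis using assms inner_lc_nabla[where g=g and p=p and w=w, OF assms(1), of S T] by linarith
qed

lemma sff_fixed_normal:
  assumes fixed: "g p *v w p = w p" and symm: "\<forall>q i j. g q $ i $ j = g q $ j $ i"
    and inv: "invertible (g p)"
    and NS: "(\<Sum>k\<in>UNIV. \<Sum>i\<in>UNIV. S p $ i * (pd i (\<lambda>q. w q $ k) p * T p $ k + w p $ k * pd i (\<lambda>q. T q $ k) p)) = 0"
    and NT: "(\<Sum>k\<in>UNIV. \<Sum>i\<in>UNIV. T p $ i * (pd i (\<lambda>q. w q $ k) p * S p $ k + w p $ k * pd i (\<lambda>q. S q $ k) p)) = 0"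
  shows "sff g w S T p = (1 / (2 * norm (w p))) *
     (- (\<Sum>i\<in>UNIV. \<Sum>k\<in>UNIV. (S p $ i * T p $ k + T p $ i * S p $ k) * pd i (\<lambda>q. w q $ k) p)
      + (\<Sum>i\<in>UNIV. \<Sum>j\<in>UNIV. S p $ i * T p $ j * normal_christoffel g w i j p))"
proof -
  have "transpose (g p) = g p" using symm by (simp add: transpose_def vec_eq_iff)
  then have row: "w p v* matrix_inv (g p) = w p" using matrix_inv_fixed_row inv fixed by blast
  have "sff g w S T p = (1 / (2 * norm (w p))) * (w p \<bullet> lc_nabla g S T p + w p \<bullet> lc_nabla g T S p)"
    unfolding sff_def unit_normal_fixed[where g=g and p=p and w=w, OF fixed inv] ginner_fixed[where g=g and p=p and w=w, OF fixed]
    by (simp add: inner_add_right inner_commute)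
  moreover have "(\<Sum>i\<in>UNIV. \<Sum>j\<in>UNIV. T p $ i * S p $ j * normal_christoffel g w i j p)
      = (\<Sum>i\<in>UNIV. \<Sum>j\<in>UNIV. S p $ i * T p $ j * normal_christoffel g w i j p)"
    by (simp add: sum_3 normal_christoffel_sym[OF symm] algebra_simps)
  ultimately show ?thesis
    unfolding inner_lc_nabla_tangent[where g=g and p=p and w=w and S=S and T=T, OF row NS] inner_lc_nabla_tangent[where g=g and p=p and w=w and S=T and T=S, OF row NT]
    by (simp add: sum.distrib distrib_right algebra_simps)
qed

section \<open>The foliation and the metric\<close>

abbreviation flat :: "real \<Rightarrow> real" where "flat \<equiv> flat_deriv 0"

lemma flat_eq: "flat t = (if 0 < t then exp (- inverse t) else 0)" by (simp add: flat_deriv_def)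
lemma flat_nonneg: "flat t \<ge> 0" by (simp add: flat_eq)
lemma flat_pos: "0 < t \<Longrightarrow> flat t > 0" by (simp add: flat_eq)
lemma flat_zero: "t \<le> 0 \<Longrightarrow> flat t = 0" by (simp add: flat_eq)

lemma flat_chain:
  "(f has_real_derivative f') (at x) \<Longrightarrow>
   ((\<lambda>x. flat (f x)) has_real_derivative flat_deriv 1 (f x) * f') (at x)"
  using DERIV_chain2[OF flat_deriv_has_derivative[of 0]] by simp

definition step_fun :: "real \<Rightarrow> real" where
  "step_fun s = flat ((s - 4/25) * (25/6)) *
     inverse (flat ((s - 4/25) * (25/6)) + flat (1 - (s - 4/25) * (25/6)))"

text \<open>For \<open>s \<ge> 3/20\<close> this is \<open>(1 - s)/s\<^sup>2\<close>; the flat summand only keeps the denominator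
  positive at \<open>s = 0\<close>.\<close>

definition twist_fun :: "real \<Rightarrow> real" where
  "twist_fun s = (1 - s) * inverse (s * s + flat (3/20 - s))"

lemma step_fun_denom_pos: "flat t + flat (1 - t) > 0"
  using flat_pos[of t] flat_pos[of "1 - t"] flat_nonneg[of t] flat_nonneg[of "1 - t"]
  by (cases "0 < t") auto

lemma twist_fun_denom_pos: "s * s + flat (3/20 - s) > 0"
proof (cases "s = 0")
  case True then show ?thesis using flat_pos[of "3/20"] by simp
next
  case False then have "s * s > 0" by (metis not_real_square_gt_zero)
  then show ?thesis using flat_nonneg[of "3/20 - s"] by linarith
qed

lemma step_fun_low: "s \<le> 4/25 \<Longrightarrow> step_fun s = 0"
  unfolding step_fun_def by (simp add: flat_zero)

lemma step_fun_high: "s \<ge> 2/5 \<Longrightarrow> step_fun s = 1"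
proof -
  assume s: "s \<ge> 2/5"
  then have "1 - (s - 4/25) * (25/6) \<le> 0" "(s - 4/25) * (25/6) > 0" by simp_all
  then show ?thesis unfolding step_fun_def using flat_zero flat_pos
    by (metis add.right_neutral less_irrefl right_inverse)
qed

lemma twist_fun_high: "s \<ge> 3/20 \<Longrightarrow> twist_fun s = (1 - s) / (s * s)"
  unfolding twist_fun_def divide_inverse by (simp add: flat_zero)

lemma twist_fun_nonneg: "0 \<le> s \<Longrightarrow> s \<le> 1 \<Longrightarrow> twist_fun s \<ge> 0"
  unfolding twist_fun_def using twist_fun_denom_pos[of s] by simp

lemma step_fun_has_deriv: "(step_fun has_real_derivative deriv step_fun x) (at x)"
proof -
  let ?u = "\<lambda>s::real. (s - 4/25) * (25/6)"
  have u: "(?u has_real_derivative 25/6) (at x)"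
    by (auto intro!: derivative_eq_intros)
  have ne: "flat (?u x) + flat (1 - ?u x) \<noteq> 0" using step_fun_denom_pos[of "?u x"] by simp
  have u': "((\<lambda>s. 1 - ?u s) has_real_derivative 0 - 25/6) (at x)"
    by (rule DERIV_diff[OF DERIV_const u])
  have "\<exists>D. (step_fun has_real_derivative D) (at x)"
    unfolding step_fun_def
    using DERIV_mult[OF flat_chain[OF u] DERIV_inverse_fun[OF DERIV_add[OF flat_chain[OF u] flat_chain[OF u']] ne]]
    by blast
  then show ?thesis using DERIV_deriv_iff_real_differentiable real_differentiable_def by blast
qed

lemma twist_fun_has_deriv: "(twist_fun has_real_derivative deriv twist_fun x) (at x)"
proof -
  have ne: "x * x + flat (3/20 - x) \<noteq> 0" using twist_fun_denom_pos[of x] by simp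
  have d: "((\<lambda>s. 3/20 - s) has_real_derivative 0 - 1) (at x)"
    by (rule DERIV_diff[OF DERIV_const DERIV_ident])
  have "\<exists>D. (twist_fun has_real_derivative D) (at x)"
    unfolding twist_fun_def
    using DERIV_mult[OF DERIV_diff[OF DERIV_const DERIV_ident]
        DERIV_inverse_fun[OF DERIV_add[OF DERIV_mult[OF DERIV_ident DERIV_ident] flat_chain[OF d]] ne]]
    by blast
  then show ?thesis using DERIV_deriv_iff_real_differentiable real_differentiable_def by blast
qed

lemma step_fun_deriv_low: "x < 4/25 \<Longrightarrow> deriv step_fun x = 0"
  by (rule DERIV_imp_deriv, rule has_field_derivative_transform_within_open[of "\<lambda>_. 0" _ _ "{..<4/25}"])
     (auto simp: step_fun_low)

lemma step_fun_deriv_high: "x > 2/5 \<Longrightarrow> deriv step_fun x = 0"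
  by (rule DERIV_imp_deriv, rule has_field_derivative_transform_within_open[of "\<lambda>_. 1" _ _ "{2/5<..}"])
     (auto simp: step_fun_high)

lemma twist_fun_deriv_high: "x > 3/20 \<Longrightarrow> deriv twist_fun x = (x - 2) / x^3"
proof -
  assume x: "x > 3/20"
  have "((\<lambda>s. (1 - s) / (s * s)) has_real_derivative (x - 2) / x^3) (at x)"
    using x by (auto intro!: derivative_eq_intros simp: field_simps power3_eq_cube)
  then have "(twist_fun has_real_derivative (x - 2) / x^3) (at x)"
    by (rule has_field_derivative_transform_within_open[of _ _ _ "{3/20<..}"])
       (use x twist_fun_high in auto)
  then show ?thesis by (rule DERIV_imp_deriv)
qed

definition rad2 :: "real^3 \<Rightarrow> real" where "rad2 p = p$1 * p$1 + p$2 * p$2"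
definition blend :: "real^3 \<Rightarrow> real" where "blend p = step_fun (rad2 p)"
definition twist :: "real^3 \<Rightarrow> real" where "twist p = twist_fun (rad2 p)"
definition rot :: "real^3 \<Rightarrow> real^3" where "rot p = vector [- p$2, p$1, 0]"

definition omega :: "real^3 \<Rightarrow> real^3" where
  "omega p = vector [blend p * p$1, blend p * p$2, 1 - blend p]"

definition twisted_metric :: "real^3 \<Rightarrow> real^3^3" where
  "twisted_metric p = (\<chi> i j. (if i = j then 1 else 0) + twist p * rot p $ i * rot p $ j)"

lemma rad2_nonneg: "rad2 p \<ge> 0" by (simp add: rad2_def)

lemma smooth_rad2: "smooth_fun rad2"
  unfolding rad2_def by (intro smooth_add smooth_mult smooth_coord)

lemma smooth_blend: "smooth_fun blend"
proof -
  let ?u = "\<lambda>p. (rad2 p - 4/25) * (25/6)"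
  have u: "smooth_fun ?u" by (intro smooth_mult smooth_diff smooth_rad2 smooth_const)
  have e1: "smooth_fun (\<lambda>p. flat (?u p))" by (rule smooth_compose[OF deriv_seq_flat_deriv _ u]) simp
  have e2: "smooth_fun (\<lambda>p. flat (1 - ?u p))"
    by (rule smooth_compose[OF deriv_seq_flat_deriv _ smooth_diff[OF smooth_const u]]) simp
  have e3: "smooth_fun (\<lambda>p. inverse_deriv 0 (flat (?u p) + flat (1 - ?u p)))"
    by (rule smooth_compose[OF deriv_seq_inverse_deriv _ smooth_add[OF e1 e2]])
       (use step_fun_denom_pos in auto)
  have "blend = (\<lambda>p. flat (?u p) * inverse_deriv 0 (flat (?u p) + flat (1 - ?u p)))"
    by (auto simp: blend_def step_fun_def inverse_deriv_0)
  then show ?thesis using smooth_mult[OF e1 e3] by simp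
qed

lemma smooth_twist: "smooth_fun twist"
proof -
  have e1: "smooth_fun (\<lambda>p. flat (3/20 - rad2 p))"
    by (rule smooth_compose[OF deriv_seq_flat_deriv]) (auto intro: smooth_diff smooth_const smooth_rad2)
  have e2: "smooth_fun (\<lambda>p. inverse_deriv 0 (rad2 p * rad2 p + flat (3/20 - rad2 p)))"
    by (rule smooth_compose[OF deriv_seq_inverse_deriv _ smooth_add[OF smooth_mult[OF smooth_rad2 smooth_rad2] e1]])
       (use twist_fun_denom_pos in auto)
  have "twist = (\<lambda>p. (1 - rad2 p) * inverse_deriv 0 (rad2 p * rad2 p + flat (3/20 - rad2 p)))"
    by (auto simp: twist_def twist_fun_def inverse_deriv_0)
  then show ?thesis using smooth_mult[OF smooth_diff[OF smooth_const[of 1] smooth_rad2] e2] by simp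
qed

lemmas smooth_rules = smooth_const smooth_coord smooth_add smooth_mult smooth_diff smooth_minus
  smooth_rad2 smooth_blend smooth_twist

lemma pd_rad2: "pd i rad2 p = 2 * p$1 * pd i (\<lambda>q. q$1) p + 2 * p$2 * pd i (\<lambda>q. q$2) p"
proof -
  have "pd i rad2 p = pd i (\<lambda>q. q$1 * q$1 + q$2 * q$2) p" by (simp add: rad2_def[abs_def])
  also have "\<dots> = 2 * p$1 * pd i (\<lambda>q. q$1) p + 2 * p$2 * pd i (\<lambda>q. q$2) p"
    by (simp add: pd_add pd_mult smooth_rules smooth_differentiable algebra_simps del: pd_coord)
  finally show ?thesis .
qed

lemma pd_blend: "pd i blend p = deriv step_fun (rad2 p) * pd i rad2 p"
  using pd_chain[OF step_fun_has_deriv smooth_differentiable[OF smooth_rad2]]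
  by (simp add: blend_def[abs_def])

lemma pd_twist: "pd i twist p = deriv twist_fun (rad2 p) * pd i rad2 p"
  using pd_chain[OF twist_fun_has_deriv smooth_differentiable[OF smooth_rad2]]
  by (simp add: twist_def[abs_def])

lemmas pd_field_rules = pd_rules pd_blend pd_twist pd_rad2 smooth_rules smooth_differentiable

lemma smooth_omega: "smooth_vf omega"
  unfolding smooth_vf_def
proof
  fix i :: 3 show "smooth_fun (\<lambda>p. omega p $ i)"
    using exhaust_3[of i] by (elim disjE; simp add: omega_def smooth_rules)
qed

lemma t_periodic_omega: "t_periodic omega"
  unfolding t_periodic_def by (simp add: omega_def blend_def rad2_def axis_def)

lemma omega_nonzero: "omega p \<noteq> 0"
proof (cases "blend p = 1")
  case True
  then have "rad2 p > 4/25" using step_fun_low[of "rad2 p"] by (force simp: blend_def)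
  then have "p$1 \<noteq> 0 \<or> p$2 \<noteq> 0" by (auto simp: rad2_def)
  moreover have "omega p $ 1 = p $ 1" "omega p $ 2 = p $ 2" using True by (simp_all add: omega_def)
  ultimately show ?thesis by (metis zero_index)
next
  case False
  then have "omega p $ 3 \<noteq> 0" by (simp add: omega_def)
  then show ?thesis by auto
qed

lemma omega_integrable: "omega p \<bullet> curl omega p = 0"
  by (simp add: curl_def inner_vec_def sum_3 omega_def pd_field_rules algebra_simps)

lemma foliation_form_omega: "foliation_form omega"
  unfolding foliation_form_def using smooth_omega t_periodic_omega omega_nonzero omega_integrable by blast

lemma omega_inner: "omega p \<bullet> u = blend p * (p$1 * u$1 + p$2 * u$2) + (1 - blend p) * u$3"
  by (simp add: omega_def inner_vec_def sum_3 algebra_simps)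

lemma twisted_metric_fixes_omega: "twisted_metric p *v omega p = omega p"
proof -
  have "(twisted_metric p *v omega p) $ i = omega p $ i" for i
    using exhaust_3[of i]
    by (elim disjE; simp add: matrix_vector_mult_def twisted_metric_def rot_def omega_def sum_3 algebra_simps)
  then show ?thesis by (simp add: vec_eq_iff)
qed

lemma twisted_metric_sym: "\<forall>q i j. twisted_metric q $ i $ j = twisted_metric q $ j $ i"
  by (simp add: twisted_metric_def)

lemma twisted_metric_posdef:
  assumes p: "p \<in> region" and u: "u \<noteq> 0"
  shows "(\<Sum>i\<in>UNIV. \<Sum>j\<in>UNIV. twisted_metric p $ i $ j * u$i * u$j) > 0"
proof -
  have "(\<Sum>i\<in>UNIV. \<Sum>j\<in>UNIV. twisted_metric p $ i $ j * u$i * u$j) =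
      u$1 * u$1 + u$2 * u$2 + u$3 * u$3 + twist p * ((rot p \<bullet> u) * (rot p \<bullet> u))"
    by (simp add: twisted_metric_def rot_def inner_vec_def sum_3 algebra_simps)
  moreover have "twist p \<ge> 0"
    using p twist_fun_nonneg[of "rad2 p"] rad2_nonneg[of p]
    by (simp add: twist_def region_def rad2_def power2_eq_square)
  moreover have "u$1 * u$1 + u$2 * u$2 + u$3 * u$3 > 0"
    using u inner_gt_zero_iff[of u] by (simp add: inner_vec_def sum_3)
  ultimately show ?thesis by (simp add: add_pos_nonneg)
qed

lemma riem_metric_twisted_metric: "riem_metric twisted_metric"
proof -
  have "smooth_fun (\<lambda>p. twisted_metric p $ i $ j)" for i j
    using exhaust_3[of i] exhaust_3[of j]
    by (elim disjE; simp add: twisted_metric_def rot_def smooth_rules)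
  moreover have "t_periodic twisted_metric"
    unfolding t_periodic_def by (simp add: twisted_metric_def rot_def twist_def rad2_def axis_def)
  ultimately show ?thesis
    unfolding riem_metric_def using twisted_metric_sym twisted_metric_posdef by blast
qed

lemma normal_christoffel_twisted_metric:
  "normal_christoffel twisted_metric omega i j p =
     -2 * blend p * (2 * twist p + deriv twist_fun (rad2 p) * rad2 p) * rot p $ i * rot p $ j"
  using exhaust_3[of i] exhaust_3[of j]
  by (elim disjE; simp add: normal_christoffel_def sum_3 twisted_metric_def rot_def omega_def pd_field_rules;
      simp add: rad2_def algebra_simps)

definition shape_form :: "real^3 \<Rightarrow> real^3 \<Rightarrow> real^3 \<Rightarrow> real" where
  "shape_form p u v = blend p * (u$1 * v$1 + u$2 * v$2)
     + 2 * deriv step_fun (rad2 p) * (p$1 * u$1 + p$2 * u$2) * (p$1 * v$1 + p$2 * v$2)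
     - deriv step_fun (rad2 p) * ((p$1 * u$1 + p$2 * u$2) * v$3 + (p$1 * v$1 + p$2 * v$2) * u$3)
     + blend p * (2 * twist p + deriv twist_fun (rad2 p) * rad2 p)
         * (- p$2 * u$1 + p$1 * u$2) * (- p$2 * v$1 + p$1 * v$2)"

lemma sff_twisted_metric:
  assumes p: "p \<in> region" and S: "tangent_vf omega S" and T: "tangent_vf omega T"
  shows "sff twisted_metric omega S T p = - shape_form p (S p) (T p) / norm (omega p)"
proof -
  have inv: "invertible (twisted_metric p)"
    using posdef_invertible twisted_metric_posdef[OF p] by blast
  have "- (\<Sum>i\<in>UNIV. \<Sum>k\<in>UNIV. (u $ i * v $ k + v $ i * u $ k) * pd i (\<lambda>q. omega q $ k) p)
      + (\<Sum>i\<in>UNIV. \<Sum>j\<in>UNIV. u $ i * v $ j * normal_christoffel twisted_metric omega i j p)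
      = -2 * shape_form p u v" for u v
    by (simp add: normal_christoffel_twisted_metric sum_3 rot_def omega_def pd_field_rules shape_form_def;
        simp add: rad2_def algebra_simps)
  moreover have sS: "smooth_vf S" and zS: "\<forall>q\<in>region. omega q \<bullet> S q = 0"
    and sT: "smooth_vf T" and zT: "\<forall>q\<in>region. omega q \<bullet> T q = 0"
    using S T unfolding tangent_vf_def by auto
  ultimately show ?thesis
    using sff_fixed_normal[OF twisted_metric_fixes_omega twisted_metric_sym inv
        tangent_field_derivative[OF smooth_omega sT zT p, of S]
        tangent_field_derivative[OF smooth_omega sS zS p, of T]]
    by simp
qed

lemma shape_form_core: "rad2 p < 4/25 \<Longrightarrow> shape_form p u v = 0"
  using step_fun_low[of "rad2 p"] step_fun_deriv_low[of "rad2 p"] by (simp add: shape_form_def blend_def)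

text \<open>The choice of \<open>twist_fun\<close> makes \<open>r\<^sup>2 (2\<sigma> + r\<^sup>2\<sigma>') = -1\<close>, which cancels the angular terms.\<close>

lemma rad2_mult_shape_form:
  assumes s: "rad2 p > 3/20"
  shows "rad2 p * shape_form p u v =
      (blend p + 2 * deriv step_fun (rad2 p) * rad2 p) * (p$1 * u$1 + p$2 * u$2) * (p$1 * v$1 + p$2 * v$2)
    - rad2 p * deriv step_fun (rad2 p) * ((p$1 * u$1 + p$2 * u$2) * v$3 + (p$1 * v$1 + p$2 * v$2) * u$3)"
proof -
  let ?s = "rad2 p"
  define m where "m = 2 * twist p + deriv twist_fun ?s * ?s"
  have m: "?s * m = -1"
    using s unfolding m_def twist_def twist_fun_high[OF less_imp_le[OF s]] twist_fun_deriv_high[OF s]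
    by (simp add: field_simps power3_eq_cube)
  have r: "?s * (u$1 * v$1 + u$2 * v$2) = (p$1 * u$1 + p$2 * u$2) * (p$1 * v$1 + p$2 * v$2)
      + (- p$2 * u$1 + p$1 * u$2) * (- p$2 * v$1 + p$1 * v$2)"
    by (simp add: rad2_def algebra_simps)
  have "?s * shape_form p u v = blend p * (?s * (u$1 * v$1 + u$2 * v$2))
     + 2 * deriv step_fun ?s * ?s * (p$1 * u$1 + p$2 * u$2) * (p$1 * v$1 + p$2 * v$2)
     - ?s * deriv step_fun ?s * ((p$1 * u$1 + p$2 * u$2) * v$3 + (p$1 * v$1 + p$2 * v$2) * u$3)
     + blend p * (?s * m) * (- p$2 * u$1 + p$1 * u$2) * (- p$2 * v$1 + p$1 * v$2)"
    unfolding shape_form_def m_def by (simp add: algebra_simps)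
  then show ?thesis unfolding m r by (simp add: algebra_simps)
qed


text \<open>On \<open>ker \<omega>\<close> the radial components \<open>p\<^sub>k\<close> and the \<open>t\<close>-components \<open>t\<^sub>k\<close> of two vectors are
  proportional, so a form of the shape below has rank at most one there.\<close>

lemma det_zero_on_kernel:
  fixes a c d s p1 t1 p2 t2 Q11 Q12 Q21 Q22 :: real
  assumes s: "s \<noteq> 0"
    and Q11: "s * Q11 = c * p1 * p1 - d * (p1 * t1 + p1 * t1)"
    and Q22: "s * Q22 = c * p2 * p2 - d * (p2 * t2 + p2 * t2)"
    and Q12: "s * Q12 = c * p1 * p2 - d * (p1 * t2 + p2 * t1)"
    and Q21: "s * Q21 = c * p2 * p1 - d * (p2 * t1 + p1 * t2)"
    and k1: "a * p1 + (1 - a) * t1 = 0" and k2: "a * p2 + (1 - a) * t2 = 0"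
  shows "Q11 * Q22 - Q12 * Q21 = 0"
proof -
  have "p1 * t2 - t1 * p2 = (t2 - p2) * (a * p1 + (1 - a) * t1) - (t1 - p1) * (a * p2 + (1 - a) * t2)"
    by (simp add: algebra_simps)
  then have X: "p1 * t2 - t1 * p2 = 0" using k1 k2 by simp
  have "s * s * (Q11 * Q22 - Q12 * Q21) = (s * Q11) * (s * Q22) - (s * Q12) * (s * Q21)"
    by (simp add: algebra_simps)
  also have "\<dots> = - (d * d) * ((p1 * t2 - t1 * p2) * (p1 * t2 - t1 * p2))"
    unfolding Q11 Q22 Q12 Q21 by (simp add: algebra_simps)
  finally show ?thesis using s X by simp
qed

lemma shape_form_det_zero:
  assumes s: "rad2 p > 3/20" and u: "omega p \<bullet> u = 0" and v: "omega p \<bullet> v = 0"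
  shows "shape_form p u u * shape_form p v v - shape_form p u v * shape_form p v u = 0"
  by (rule det_zero_on_kernel[of "rad2 p" _ "blend p + 2 * deriv step_fun (rad2 p) * rad2 p"
        "p$1 * u$1 + p$2 * u$2" "rad2 p * deriv step_fun (rad2 p)" "u$3" _ "p$1 * v$1 + p$2 * v$2" "v$3"
        _ _ "blend p"])
     (use s u v in \<open>simp_all add: rad2_mult_shape_form[OF s] omega_inner algebra_simps\<close>)

lemma shape_form_outer:
  assumes s: "rad2 p \<ge> 4/9" and u: "omega p \<bullet> u = 0"
  shows "shape_form p u v = 0"
proof -
  have "blend p = 1" "deriv step_fun (rad2 p) = 0"
    using step_fun_high[of "rad2 p"] step_fun_deriv_high[of "rad2 p"] s by (simp_all add: blend_def)
  moreover from this have "p$1 * u$1 + p$2 * u$2 = 0" using u by (simp add: omega_inner)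
  ultimately have "rad2 p * shape_form p u v = 0" using rad2_mult_shape_form[of p u v] s by simp
  then show ?thesis using s by simp
qed

lemma parabolic_twisted_metric: "parabolic twisted_metric omega"
  unfolding parabolic_def
proof (intro ballI allI impI)
  fix p E1 E2
  assume p: "p \<in> region" and E: "tangent_vf omega E1 \<and> tangent_vf omega E2 \<and> \<not> collinear {0, E1 p, E2 p}"
  have k: "omega p \<bullet> E1 p = 0" "omega p \<bullet> E2 p = 0" using E p unfolding tangent_vf_def by auto
  have "shape_form p (E1 p) (E1 p) * shape_form p (E2 p) (E2 p)
      - shape_form p (E1 p) (E2 p) * shape_form p (E2 p) (E1 p) = 0"
  proof (cases "rad2 p < 4/25")
    case True then show ?thesis by (simp add: shape_form_core)
  next
    case False then show ?thesis using shape_form_det_zero[OF _ k] by simp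
  qed
  then show "ext_curv twisted_metric omega E1 E2 p = 0"
    using E p by (simp add: ext_curv_def sff_twisted_metric field_simps)
qed

lemma inner_part_rad2: "p \<in> inner_part \<Longrightarrow> p \<in> region \<and> rad2 p < 4/25"
  by (simp add: inner_part_def region_def rad2_def power2_eq_square)

lemma outer_part_rad2: "p \<in> outer_part \<Longrightarrow> p \<in> region \<and> rad2 p \<ge> 4/9"
  by (simp add: outer_part_def region_def rad2_def power2_eq_square)

lemma omega_inner_part: "p \<in> inner_part \<Longrightarrow> omega p $ 1 = 0 \<and> omega p $ 2 = 0"
  using inner_part_rad2[of p] step_fun_low[of "rad2 p"] by (simp add: omega_def blend_def)

lemma omega_outer_part: "p \<in> outer_part \<Longrightarrow> omega p $ 3 = 0 \<and> p$1 * omega p $ 2 - p$2 * omega p $ 1 = 0"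
  using outer_part_rad2[of p] step_fun_high[of "rad2 p"] by (simp add: omega_def blend_def)

lemma totally_geodesic_inner_part: "totally_geodesic_on twisted_metric omega inner_part"
  unfolding totally_geodesic_on_def using inner_part_rad2 by (auto simp: sff_twisted_metric shape_form_core)

lemma totally_geodesic_outer_part: "totally_geodesic_on twisted_metric omega outer_part"
  unfolding totally_geodesic_on_def
proof (intro ballI allI impI)
  fix p S T assume p: "p \<in> outer_part" and ST: "tangent_vf omega S \<and> tangent_vf omega T"
  then have "omega p \<bullet> S p = 0" using outer_part_rad2 unfolding tangent_vf_def by auto
  then show "sff twisted_metric omega S T p = 0"
    using p ST outer_part_rad2 sff_twisted_metric shape_form_outer by simp
qed

theorem lemma4p2:
  shows "\<exists>(w :: real^3 \<Rightarrow> real^3) (g :: real^3 \<Rightarrow> real^3^3).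
     foliation_form w \<and> riem_metric g \<and>
     parabolic g w \<and>
     (\<forall>p\<in>inner_part. w p $ 1 = 0 \<and> w p $ 2 = 0) \<and>
     totally_geodesic_on g w inner_part \<and>
     (\<forall>p\<in>outer_part. w p $ 3 = 0 \<and> p$1 * w p $ 2 - p$2 * w p $ 1 = 0) \<and>
     totally_geodesic_on g w outer_part"
  using foliation_form_omega riem_metric_twisted_metric parabolic_twisted_metric
    omega_inner_part totally_geodesic_inner_part omega_outer_part totally_geodesic_outer_part
  by blast

end
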